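(* Let $g\neq0$ be a special Bernstein function. Then \[\frac{1}{3e}\,|g(z)|\le g(|z|)\le 3e\,|g(z)|\] for all $z\in\mathbb C$ with $\operatorname{Re}z\ge0$.
   Context: A Bernstein function is $g(z)=a+bz+\int_{(0,\infty)}(1-e^{-sz})\mu(\mathrm ds)$ with $a,b\ge0$ and $\mu$ a positive Radon measure on $(0,\infty)$ with $\int\frac{s}{1+s}\mu(\mathrm ds)<\infty$; it is identified with its holomorphic extension to $\{\operatorname{Re}z>0\}$ given by this formula, which extends continuously to $\{\operatorname{Re}z\ge0\}$. A Bernstein function $g\ne0$ is special if $z\mapsto z/g(z)$ is again a Bernstein function. *)

theory Defs
  imports "HOL-Analysis.Analysis"
begin

text \<open>Levy triple of a Bernstein function: a, b \<ge> 0 and a positive measure mu on the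
  Borel sets of the real line, carried by (0,\<infinity>), with \<integral> s/(1+s) dmu < \<infinity>.
  (Such a measure is automatically Radon on (0,\<infinity>).)\<close>
definition bernstein_triple :: "real \<Rightarrow> real \<Rightarrow> real measure \<Rightarrow> bool" where
  "bernstein_triple a b \<mu> \<longleftrightarrow>
     a \<ge> 0 \<and> b \<ge> 0 \<and> sets \<mu> = sets borel \<and> emeasure \<mu> {..0} = 0 \<and>
     integrable \<mu> (\<lambda>s. s / (1 + s))"

definition bernstein_fun :: "real \<Rightarrow> real \<Rightarrow> real measure \<Rightarrow> complex \<Rightarrow> complex" where
  "bernstein_fun a b \<mu> z =
     complex_of_real a + complex_of_real b * z +
     integral\<^sup>L \<mu> (\<lambda>s. 1 - exp (- (complex_of_real s * z)))"

text \<open>A Bernstein function, identified with its extension to the closed right half-plane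
  (values outside Re z \<ge> 0 are irrelevant).\<close>
definition is_bernstein :: "(complex \<Rightarrow> complex) \<Rightarrow> bool" where
  "is_bernstein g \<longleftrightarrow>
     (\<exists>a b \<mu>. bernstein_triple a b \<mu> \<and> (\<forall>z. Re z \<ge> 0 \<longrightarrow> g z = bernstein_fun a b \<mu> z))"

text \<open>A special Bernstein function: g \<noteq> 0 and z \<mapsto> z / g z is again Bernstein
  (on the open right half-plane, where g has no zeros).\<close>
definition special_bernstein :: "(complex \<Rightarrow> complex) \<Rightarrow> bool" where
  "special_bernstein g \<longleftrightarrow>
     is_bernstein g \<and> (\<exists>z. Re z \<ge> 0 \<and> g z \<noteq> 0) \<and>
     (\<exists>h. is_bernstein h \<and> (\<forall>z. Re z > 0 \<longrightarrow> h z = z / g z))"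

end

theory Submission
  imports Defs
begin

(* Write g(z) = a + b z + \<integral> (1 - e^(-sz)) \<mu>(ds).  For Re w \<ge> 0 the Levy kernel
   satisfies |1 - e^(-w)| \<le> min 2 |w| \<le> 4 (1 - e^(-|w|)), and integrating this against \<mu>
   gives, for EVERY Bernstein function f and Re z \<ge> 0,
        |f(z)| \<le> 4 f(|z|)                                                (1)
   where f(|z|) is real and nonnegative.  If g is special, apply (1) to h(z) = z / g(z):
   |z| / |g(z)| \<le> 4 |z| / g(|z|), i.e. g(|z|) \<le> 4 |g(z)| for Re z > 0; this needs that a
   Bernstein function vanishing at one point of the open half-plane vanishes identically.
   Continuity of Bernstein functions on the closed half-plane (dominated convergence)
   carries the reverse bound to the imaginary axis, and 4 \<le> 3e gives the theorem. *)

section \<open>Estimates for the Levy kernel\<close>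

lemma norm_one_minus_exp_le:
  assumes "0 \<le> Re w"
  shows "cmod (1 - exp (- w)) \<le> min 2 (cmod w)"
proof -
  have exp_le_1: "cmod (exp (- z)) \<le> 1" if "0 \<le> Re z" for z
    using that by (simp add: norm_exp_eq_Re)
  have "cmod (1 - exp (- w)) \<le> 1 + cmod (exp (- w))"
    using norm_triangle_ineq4[of 1 "exp (- w)"] by simp
  then have bounded: "cmod (1 - exp (- w)) \<le> 2"
    using exp_le_1[OF assms] by linarith
  have "norm ((\<lambda>z. exp (- z)) w - (\<lambda>z. exp (- z)) 0) \<le> 1 * norm (w - 0)"
  proof (rule field_differentiable_bound[where S = "{z. 0 \<le> Re z}" and f' = "\<lambda>z. - exp (- z)"])
    show "convex {z. 0 \<le> Re z}"
      using convex_halfspace_Re_ge[of 0] by (simp add: atLeast_def)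
    fix z assume "z \<in> {z. 0 \<le> Re z}"
    then show "((\<lambda>z. exp (- z)) has_field_derivative - exp (- z)) (at z within {z. 0 \<le> Re z})"
      and "cmod (- exp (- z)) \<le> 1"
      by (auto intro!: derivative_eq_intros exp_le_1)
  qed (use assms in auto)
  then have "cmod (1 - exp (- w)) \<le> cmod w"
    by (simp add: norm_minus_commute)
  with bounded show ?thesis by simp
qed

lemma div_one_plus_le_one_minus_exp:
  assumes "0 \<le> (t::real)"
  shows "t / (1 + t) \<le> 1 - exp (- t)"
proof -
  have "exp (- t) \<le> 1 / (1 + t)"
    using exp_ge_add_one_self[of t] assms by (simp add: exp_minus field_simps)
  also have "1 / (1 + t) = 1 - t / (1 + t)"
    using assms by (simp add: field_simps)
  finally show ?thesis by simp
qed

lemma levy_kernel_le_real_kernel: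
  assumes "0 \<le> Re z" "0 \<le> s"
  shows "cmod (1 - exp (- (complex_of_real s * z))) \<le> 4 * (1 - exp (- (s * cmod z)))"
proof -
  define t where "t = s * cmod z"
  have t_nonneg: "0 \<le> t" using assms by (simp add: t_def)
  have "cmod (1 - exp (- (complex_of_real s * z))) \<le> min 2 t"
    using norm_one_minus_exp_le[of "complex_of_real s * z"] assms
    by (simp add: t_def norm_mult)
  also have "min 2 t \<le> 4 * (t / (1 + t))"
  proof (cases "t \<le> 1")
    case True
    then show ?thesis using t_nonneg mult_left_mono[of t 3 t] by (simp add: field_simps)
  next
    case False
    then have "2 \<le> 4 * (t / (1 + t))" by (simp add: field_simps)
    then show ?thesis by linarith
  qed
  also have "\<dots> \<le> 4 * (1 - exp (- t))"
    using div_one_plus_le_one_minus_exp[OF t_nonneg] by simp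
  finally show ?thesis by (simp add: t_def)
qed

text \<open>A bound by the integrable weight s / (1 + s), uniform for |z| \<le> R; it provides the
  integrability of the kernel and the domination needed for continuity.\<close>
lemma levy_kernel_le_weight:
  assumes "0 \<le> Re z" "0 < s" "cmod z \<le> R"
  shows "cmod (1 - exp (- (complex_of_real s * z))) \<le> (4 + 2 * R) * (s / (1 + s))"
proof -
  have R_nonneg: "0 \<le> R" using assms(3) norm_ge_zero order_trans by blast
  have "cmod (1 - exp (- (complex_of_real s * z))) \<le> min 2 (cmod (complex_of_real s * z))"
    using norm_one_minus_exp_le[of "complex_of_real s * z"] assms by simp
  also have "\<dots> \<le> min 2 (s * R)"
    using assms by (intro min.mono order_refl) (simp add: norm_mult mult_left_mono)
  also have "min 2 (s * R) \<le> (4 + 2 * R) * (s / (1 + s))"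
  proof (cases "s \<le> 1")
    case True
    have "s * R \<le> 2 * R * (s / (1 + s))"
      using True assms(2) R_nonneg by (simp add: field_simps mult_left_mono)
    moreover have "0 \<le> 4 * (s / (1 + s))" using assms(2) by simp
    ultimately show ?thesis by (simp add: algebra_simps)
  next
    case False
    have "2 \<le> 4 * (s / (1 + s))" using False by (simp add: field_simps)
    moreover have "0 \<le> 2 * R * (s / (1 + s))" using assms(2) R_nonneg by simp
    ultimately show ?thesis by (simp add: algebra_simps)
  qed
  finally show ?thesis .
qed

lemma Re_levy_kernel_pos:
  assumes "0 < Re z" "0 < s"
  shows "0 < Re (1 - exp (- (complex_of_real s * z)))"
proof -
  have "Re (exp (- (complex_of_real s * z))) \<le> cmod (exp (- (complex_of_real s * z)))"
    by (rule complex_Re_le_cmod)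
  also have "\<dots> = exp (- (s * Re z))" by (simp add: norm_exp_eq_Re)
  also have "\<dots> < 1" using assms by simp
  finally show ?thesis by simp
qed

lemma levy_kernel_of_real:
  "1 - exp (- (complex_of_real s * complex_of_real x)) = complex_of_real (1 - exp (- (s * x)))"
  by (simp flip: exp_of_real)

section \<open>The integral representation\<close>

lemma bernstein_tripleD:
  assumes "bernstein_triple a b \<mu>"
  shows "0 \<le> a" "0 \<le> b" "space \<mu> = UNIV" "AE s in \<mu>. 0 < s"
    and "integrable \<mu> (\<lambda>s. s / (1 + s))"
proof -
  have sets: "sets \<mu> = sets borel" and null: "emeasure \<mu> {..0} = 0"
    using assms by (auto simp: bernstein_triple_def)
  show "0 \<le> a" "0 \<le> b" "integrable \<mu> (\<lambda>s. s / (1 + s))"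
    using assms by (auto simp: bernstein_triple_def)
  show space: "space \<mu> = UNIV" using sets_eq_imp_space_eq[OF sets] by simp
  have "{..0::real} \<in> null_sets \<mu>" using sets null by (auto intro: null_setsI)
  then show "AE s in \<mu>. 0 < s" by (rule AE_I') (auto simp: space)
qed

lemma levy_kernel_measurable:
  assumes "bernstein_triple a b \<mu>"
  shows "(\<lambda>s. 1 - exp (- (complex_of_real s * z))) \<in> borel_measurable \<mu>"
proof -
  have "sets \<mu> = sets borel" using assms by (auto simp: bernstein_triple_def)
  moreover have "(\<lambda>s. 1 - exp (- (complex_of_real s * z))) \<in> borel_measurable borel"
    by (intro borel_measurable_continuous_onI continuous_intros)
  ultimately show ?thesis using measurable_cong_sets by blast
qed

lemma levy_kernel_integrable:
  assumes triple: "bernstein_triple a b \<mu>" and z: "0 \<le> Re z"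
  shows "integrable \<mu> (\<lambda>s. 1 - exp (- (complex_of_real s * z)))"
proof (rule Bochner_Integration.integrable_bound)
  show "integrable \<mu> (\<lambda>s. (4 + 2 * cmod z) * (s / (1 + s)))"
    using bernstein_tripleD(5)[OF triple] by (rule integrable_mult_right)
  show "AE s in \<mu>. norm (1 - exp (- (complex_of_real s * z)))
                      \<le> norm ((4 + 2 * cmod z) * (s / (1 + s)))"
    using bernstein_tripleD(4)[OF triple]
    by eventually_elim (use levy_kernel_le_weight[OF z _ order_refl] in auto)
qed (rule levy_kernel_measurable[OF triple])

definition bernstein_real :: "real \<Rightarrow> real \<Rightarrow> real measure \<Rightarrow> real \<Rightarrow> real" where
  "bernstein_real a b \<mu> x = a + b * x + integral\<^sup>L \<mu> (\<lambda>s. 1 - exp (- (s * x)))"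

lemma bernstein_fun_of_real:
  "bernstein_fun a b \<mu> (complex_of_real x) = complex_of_real (bernstein_real a b \<mu> x)"
  unfolding bernstein_fun_def bernstein_real_def levy_kernel_of_real integral_complex_of_real
  by simp

lemma bernstein_real_nonneg:
  assumes "bernstein_triple a b \<mu>" "0 \<le> x"
  shows "0 \<le> bernstein_real a b \<mu> x"
proof -
  have "0 \<le> integral\<^sup>L \<mu> (\<lambda>s. 1 - exp (- (s * x)))"
    by (rule integral_nonneg_AE)
      (use bernstein_tripleD(4)[OF assms(1)] in \<open>eventually_elim, use assms(2) in simp\<close>)
  then show ?thesis
    using bernstein_tripleD(1,2)[OF assms(1)] assms(2) by (simp add: bernstein_real_def)
qed

lemma norm_bernstein_fun_le:
  assumes triple: "bernstein_triple a b \<mu>" and z: "0 \<le> Re z"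
  shows "cmod (bernstein_fun a b \<mu> z) \<le> 4 * bernstein_real a b \<mu> (cmod z)"
proof -
  note tripleD = bernstein_tripleD[OF triple]
  define J where "J = integral\<^sup>L \<mu> (\<lambda>s. 1 - exp (- (s * cmod z)))"
  have real_kernel_integrable: "integrable \<mu> (\<lambda>s. 1 - exp (- (s * cmod z)))"
    using integrable_Re[OF levy_kernel_integrable[OF triple, of "complex_of_real (cmod z)"]]
    by (simp add: levy_kernel_of_real)
  have "cmod (bernstein_fun a b \<mu> z)
        \<le> cmod (complex_of_real a) + cmod (complex_of_real b * z)
          + cmod (integral\<^sup>L \<mu> (\<lambda>s. 1 - exp (- (complex_of_real s * z))))"
    unfolding bernstein_fun_def by (intro norm_triangle_le add_mono norm_triangle_ineq order_refl)
  also have "cmod (complex_of_real a) + cmod (complex_of_real b * z) = a + b * cmod z"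
    using tripleD(1,2) by (simp add: norm_mult)
  also have "cmod (integral\<^sup>L \<mu> (\<lambda>s. 1 - exp (- (complex_of_real s * z))))
             \<le> integral\<^sup>L \<mu> (\<lambda>s. cmod (1 - exp (- (complex_of_real s * z))))"
    by (rule integral_norm_bound)
  also have "\<dots> \<le> integral\<^sup>L \<mu> (\<lambda>s. 4 * (1 - exp (- (s * cmod z))))"
  proof (rule integral_mono_AE')
    show "integrable \<mu> (\<lambda>s. 4 * (1 - exp (- (s * cmod z))))"
      using real_kernel_integrable by (rule integrable_mult_right)
    show "AE s in \<mu>. cmod (1 - exp (- (complex_of_real s * z))) \<le> 4 * (1 - exp (- (s * cmod z)))"
      using tripleD(4) by eventually_elim (rule levy_kernel_le_real_kernel[OF z], simp)
    show "AE s in \<mu>. 0 \<le> 4 * (1 - exp (- (s * cmod z)))"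
      using tripleD(4) by eventually_elim simp
  qed
  also have "\<dots> = 4 * J" unfolding J_def by (rule integral_mult_right_zero)
  finally have "cmod (bernstein_fun a b \<mu> z) \<le> a + b * cmod z + 4 * J" by simp
  moreover have "0 \<le> a + b * cmod z" using tripleD(1,2) by simp
  ultimately show ?thesis unfolding J_def bernstein_real_def by (simp add: algebra_simps)
qed

lemma bernstein_fun_continuous:
  assumes triple: "bernstein_triple a b \<mu>"
  shows "continuous_on {z. 0 \<le> Re z} (bernstein_fun a b \<mu>)"
  unfolding continuous_on_sequentially comp_def
proof (intro allI ballI impI, elim conjE)
  fix w :: "nat \<Rightarrow> complex" and w0
  assume w: "\<forall>n. w n \<in> {z. 0 \<le> Re z}" and lim: "w \<longlonglongrightarrow> w0"
  obtain R where R: "\<And>n. cmod (w n) \<le> R"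
    using BseqD[OF convergent_imp_Bseq[OF convergentI[OF lim]]] by blast
  have "(\<lambda>n. integral\<^sup>L \<mu> (\<lambda>s. 1 - exp (- (complex_of_real s * w n)))) \<longlonglongrightarrow>
        integral\<^sup>L \<mu> (\<lambda>s. 1 - exp (- (complex_of_real s * w0)))"
  proof (rule integral_dominated_convergence[where w = "\<lambda>s. (4 + 2 * R) * (s / (1 + s))"])
    show "integrable \<mu> (\<lambda>s. (4 + 2 * R) * (s / (1 + s)))"
      using bernstein_tripleD(5)[OF triple] by (rule integrable_mult_right)
    show "AE s in \<mu>. (\<lambda>n. 1 - exp (- (complex_of_real s * w n)))
                      \<longlonglongrightarrow> 1 - exp (- (complex_of_real s * w0))"
      by (intro AE_I2 tendsto_intros lim)
    show "AE s in \<mu>. cmod (1 - exp (- (complex_of_real s * w n))) \<le> (4 + 2 * R) * (s / (1 + s))"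
      for n
      using bernstein_tripleD(4)[OF triple]
      by eventually_elim (use levy_kernel_le_weight[OF _ _ R] w in auto)
  qed (auto intro: levy_kernel_measurable[OF triple])
  then show "(\<lambda>n. bernstein_fun a b \<mu> (w n)) \<longlonglongrightarrow> bernstein_fun a b \<mu> w0"
    unfolding bernstein_fun_def by (intro tendsto_intros lim)
qed

text \<open>A zero in the open half-plane forces a = b = 0 and \<mu> = 0: taking real parts, every
  summand is nonnegative, and the kernel has positive real part \<mu>-almost everywhere.\<close>
lemma bernstein_fun_zero:
  assumes triple: "bernstein_triple a b \<mu>" and z: "0 < Re z"
    and zero: "bernstein_fun a b \<mu> z = 0"
  shows "bernstein_fun a b \<mu> w = 0"
proof -
  note tripleD = bernstein_tripleD[OF triple]
  define k where "k s = Re (1 - exp (- (complex_of_real s * z)))" for s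
  have k_integrable: "integrable \<mu> k"
    unfolding k_def using levy_kernel_integrable[OF triple] z by (intro integrable_Re) simp
  have k_pos: "AE s in \<mu>. 0 < k s"
    using tripleD(4) unfolding k_def by eventually_elim (rule Re_levy_kernel_pos[OF z])
  then have k_nonneg: "AE s in \<mu>. 0 \<le> k s" by eventually_elim simp
  have "a + b * Re z + integral\<^sup>L \<mu> k = Re (bernstein_fun a b \<mu> z)"
    unfolding bernstein_fun_def k_def
    using integral_Re[OF levy_kernel_integrable[OF triple, of z]] z by simp
  then have sum_zero: "a + b * Re z + integral\<^sup>L \<mu> k = 0" using zero by simp
  have "0 \<le> b * Re z" using tripleD(2) z by simp
  moreover have "0 \<le> integral\<^sup>L \<mu> k" by (rule integral_nonneg_AE[OF k_nonneg])
  ultimately have "a = 0" "b * Re z = 0" "integral\<^sup>L \<mu> k = 0"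
    using sum_zero tripleD(1) by linarith+
  then have a0: "a = 0" and b0: "b = 0" and k_zero: "AE s in \<mu>. k s = 0"
    using z integral_nonneg_eq_0_iff_AE[OF k_integrable k_nonneg] by auto
  from k_pos k_zero have "AE s in \<mu>. False" by eventually_elim simp
  then have "integral\<^sup>L \<mu> (\<lambda>s. 1 - exp (- (complex_of_real s * w))) = integral\<^sup>L \<mu> (\<lambda>s. 0)"
    by (intro integral_cong_AE levy_kernel_measurable[OF triple]) (auto elim: eventually_mono)
  then show ?thesis unfolding bernstein_fun_def a0 b0 by simp
qed

section \<open>Bernstein functions\<close>

lemma is_bernsteinE:
  assumes "is_bernstein f"
  obtains a b \<mu> where "bernstein_triple a b \<mu>"
    and "\<And>z. 0 \<le> Re z \<Longrightarrow> f z = bernstein_fun a b \<mu> z"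
  using assms unfolding is_bernstein_def by blast

lemma bernstein_of_real:
  assumes "is_bernstein f" "0 \<le> x"
  shows "f (complex_of_real x) = complex_of_real (Re (f (complex_of_real x)))"
    and "0 \<le> Re (f (complex_of_real x))"
proof -
  obtain a b \<mu> where triple: "bernstein_triple a b \<mu>"
    and f: "\<And>z. 0 \<le> Re z \<Longrightarrow> f z = bernstein_fun a b \<mu> z"
    using assms(1) by (elim is_bernsteinE) blast
  have "f (complex_of_real x) = complex_of_real (bernstein_real a b \<mu> x)"
    using f[of "complex_of_real x"] assms(2) by (simp add: bernstein_fun_of_real)
  then show "f (complex_of_real x) = complex_of_real (Re (f (complex_of_real x)))"
    and "0 \<le> Re (f (complex_of_real x))"
    using bernstein_real_nonneg[OF triple assms(2)] by simp_all
qed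

lemma bernstein_norm_le:
  assumes "is_bernstein f" "0 \<le> Re z"
  shows "cmod (f z) \<le> 4 * Re (f (complex_of_real (cmod z)))"
proof -
  obtain a b \<mu> where triple: "bernstein_triple a b \<mu>"
    and f: "\<And>z. 0 \<le> Re z \<Longrightarrow> f z = bernstein_fun a b \<mu> z"
    using assms(1) by (elim is_bernsteinE) blast
  show ?thesis
    using norm_bernstein_fun_le[OF triple assms(2)] f[OF assms(2)] f[of "complex_of_real (cmod z)"]
    by (simp add: bernstein_fun_of_real)
qed

lemma bernstein_continuous:
  assumes "is_bernstein f"
  shows "continuous_on {z. 0 \<le> Re z} f"
proof -
  obtain a b \<mu> where triple: "bernstein_triple a b \<mu>"
    and f: "\<And>z. 0 \<le> Re z \<Longrightarrow> f z = bernstein_fun a b \<mu> z"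
    using assms by (elim is_bernsteinE) blast
  show ?thesis
    using bernstein_fun_continuous[OF triple] by (rule continuous_on_eq) (simp add: f)
qed

lemma bernstein_zero:
  assumes "is_bernstein f" "0 < Re z" "f z = 0" "0 \<le> Re w"
  shows "f w = 0"
proof -
  obtain a b \<mu> where triple: "bernstein_triple a b \<mu>"
    and f: "\<And>z. 0 \<le> Re z \<Longrightarrow> f z = bernstein_fun a b \<mu> z"
    using assms(1) by (elim is_bernsteinE) blast
  show ?thesis
    using bernstein_fun_zero[OF triple assms(2)] assms(2-4) f by simp
qed

section \<open>Special Bernstein functions\<close>

text \<open>A special Bernstein function has no zeros in the open half-plane, since it is
  not identically zero.\<close>
lemma special_bernstein_nonzero:
  assumes "special_bernstein g" "0 < Re z"
  shows "g z \<noteq> 0"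
  using assms bernstein_zero unfolding special_bernstein_def by blast

text \<open>The reverse of (1) for g, obtained by applying (1) to z / g(z); first in the open
  half-plane, then on its closure by continuity.\<close>
lemma special_bernstein_reverse_bound_open:
  assumes special: "special_bernstein g" and z: "0 < Re z"
  shows "Re (g (complex_of_real (cmod z))) \<le> 4 * cmod (g z)"
proof -
  obtain h where h: "is_bernstein h" and h_eq: "\<And>z. 0 < Re z \<Longrightarrow> h z = z / g z"
    using special unfolding special_bernstein_def by blast
  have g: "is_bernstein g" using special by (simp add: special_bernstein_def)
  define r where "r = cmod z"
  have r_pos: "0 < r" using z by (auto simp: r_def)
  define G where "G = Re (g (complex_of_real r))"
  have g_r: "g (complex_of_real r) = complex_of_real G"
    unfolding G_def by (rule bernstein_of_real(1)[OF g]) (use r_pos in simp)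
  have "0 \<le> G"
    unfolding G_def using bernstein_of_real(2)[OF g] r_pos by simp
  moreover have "G \<noteq> 0"
    using special_bernstein_nonzero[OF special, of "complex_of_real r"] g_r r_pos by auto
  ultimately have G_pos: "0 < G" by simp
  have gz_pos: "0 < cmod (g z)" using special_bernstein_nonzero[OF special z] by simp
  have "r / cmod (g z) = cmod (h z)"
    using h_eq[OF z] by (simp add: norm_divide r_def)
  also have "\<dots> \<le> 4 * Re (h (complex_of_real r))"
    using bernstein_norm_le[OF h] z by (simp add: r_def)
  also have "h (complex_of_real r) = complex_of_real (r / G)"
    using h_eq[of "complex_of_real r"] r_pos g_r by simp
  finally have "r / cmod (g z) \<le> 4 * (r / G)" by simp
  then have "r * G \<le> r * (4 * cmod (g z))"
    using gz_pos G_pos by (simp add: field_simps)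
  then show ?thesis using r_pos by (simp add: G_def r_def)
qed

lemma special_bernstein_reverse_bound:
  assumes special: "special_bernstein g" and z: "0 \<le> Re z"
  shows "Re (g (complex_of_real (cmod z))) \<le> 4 * cmod (g z)"
proof -
  have g: "continuous_on {z. 0 \<le> Re z} g"
    using special by (simp add: special_bernstein_def bernstein_continuous)
  have closure: "closure {z. 0 < Re z} = {z. 0 \<le> Re z}"
    using closure_halfspace_gt[of "1::complex" 0] by simp
  have "continuous_on {z. 0 \<le> Re z} (\<lambda>z. 4 * cmod (g z) - Re (g (complex_of_real (cmod z))))"
    by (intro continuous_intros continuous_on_compose2[OF g]) auto
  then have "0 \<le> 4 * cmod (g z) - Re (g (complex_of_real (cmod z)))"
    by (rule continuous_ge_on_closure[of "{z. 0 < Re z}", unfolded closure])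
      (use z special_bernstein_reverse_bound_open[OF special] in auto)
  then show ?thesis by simp
qed

theorem theorem2p7:
  fixes g :: "complex \<Rightarrow> complex" and z :: complex
  assumes "special_bernstein g"
    and "Re z \<ge> 0"
  shows "g (complex_of_real (cmod z)) \<in> \<real>
     \<and> cmod (g z) / (3 * exp 1) \<le> Re (g (complex_of_real (cmod z)))
     \<and> Re (g (complex_of_real (cmod z))) \<le> 3 * exp 1 * cmod (g z)"
proof -
  have g: "is_bernstein g" using assms(1) by (simp add: special_bernstein_def)
  define G where "G = Re (g (complex_of_real (cmod z)))"
  have real: "g (complex_of_real (cmod z)) \<in> \<real>"
    using bernstein_of_real(1)[OF g, of "cmod z"] by (metis Reals_of_real norm_ge_zero)
  have G_nonneg: "0 \<le> G" using bernstein_of_real(2)[OF g] by (simp add: G_def)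
  have four_le: "4 \<le> 3 * exp (1::real)" using exp_ge_add_one_self[of "1::real"] by simp
  have "cmod (g z) \<le> 3 * exp 1 * G"
    using bernstein_norm_le[OF g assms(2)] mult_right_mono[OF four_le G_nonneg]
    by (simp add: G_def)
  moreover have "G \<le> 3 * exp 1 * cmod (g z)"
    using special_bernstein_reverse_bound[OF assms] mult_right_mono[OF four_le norm_ge_zero[of "g z"]]
    by (simp add: G_def)
  ultimately show ?thesis using real by (simp add: G_def field_simps)
qed

end
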